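(* Assume $\mathbf X$ is uniformly distributed on $[0,1]^d$ and $\|Y\|_\infty<\infty$. Assume $K_n,\gamma_1,\gamma_2\to\infty$ with $K_n^2e^{-2\gamma_2}\to0$ and $K_n^4\gamma_2^2\log(\gamma_1)/\gamma_1\to0$. Then $$\mathbb E\int_{[0,1]^d}\big|f_{\lambda^\star}(\mathbf x)-t_{\lambda^\star}(\mathbf x)\big|^2\mu(d\mathbf x)\to0\qquad(n\to\infty).$$
   Context: $(\mathbf X,Y)$ random pair, $\mu$ the law of $\mathbf X$, $\mathscr D_n$ an i.i.d. sample of copies of $(\mathbf X,Y)$ and $\Theta$ an independent randomization. The tree is a randomized CART tree with $K_n$ leaves $L_1,\dots,L_{K_n}$ built from $\Theta$ and $\mathscr D_n$ (axis-aligned binary splits; root $[0,1]^d$; a node with cell $A$ and split $(j,\alpha)$ has left child $\{\mathbf x\in A:x^{(j)}<\alpha\}$ and right child $\{\mathbf x\in A:x^{(j)}\ge\alpha\}$); its $K_n-1$ internal splits are $(j_k,\alpha_k)$. The parameter $\lambda^\star=(\mathbf W_1^\star,\mathbf b_1^\star,\mathbf W_2^\star,\mathbf b_2^\star,\mathbf W_{\rm out}^\star,b^\star_{\rm out})$ is: $\mathbf W_1^\star\in\mathbb R^{d\times(K_n-1)}$ with column $k$ equal to the $j_k$-th unit vector, $(\mathbf b_1^\star)_k=-\alpha_k$; $(\mathbf W_2^\star)_{k,k'}=+1$ (resp. $-1$) if split $k$ is on the root-to-$L_{k'}$ path and that path goes to its right (resp. left) child, $0$ if split $k$ is not on that path;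 $(\mathbf b_2^\star)_{k'}=-\ell(k')+\frac12$ with $\ell(k')$ the depth of $L_{k'}$; $(\mathbf W^\star_{\rm out})_{k'}=\frac12\mathbb E[Y\mid\mathbf X\in L_{k'}]$; $b^\star_{\rm out}=\frac12\sum_{k'}\mathbb E[Y\mid\mathbf X\in L_{k'}]$ (conditional expectations given the tree). With $\tau(u)=2\mathbf 1_{u\ge0}-1$ and $\sigma_i(u)=\tanh(\gamma_iu)$ entrywise, $t_{\lambda^\star}(\mathbf x)=\mathbf W^{\star\top}_{\rm out}\tau(\mathbf W_2^{\star\top}\tau(\mathbf W_1^{\star\top}\mathbf x+\mathbf b_1^\star)+\mathbf b_2^\star)+b^\star_{\rm out}$ and $f_{\lambda^\star}(\mathbf x)=\mathbf W^{\star\top}_{\rm out}\sigma_2(\mathbf W_2^{\star\top}\sigma_1(\mathbf W_1^{\star\top}\mathbf x+\mathbf b_1^\star)+\mathbf b_2^\star)+b^\star_{\rm out}$. The outer expectation is over $\Theta$ and $\mathscr D_n$. *)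

theory Defs
  imports "HOL-Probability.Probability"
begin

text \<open>Binary axis-aligned trees on real vectors indexed by 'd.
  Node j a l r: split on coordinate j at threshold a; left child {x. x$j < a},
  right child {x. x$j >= a}.\<close>
datatype 'd tree = Leaf | Node 'd real "'d tree" "'d tree"

fun inodes :: "'d tree \<Rightarrow> bool list list" where
  "inodes Leaf = []"
| "inodes (Node j a l r) = [] # map (Cons False) (inodes l) @ map (Cons True) (inodes r)"

fun leaves :: "'d tree \<Rightarrow> bool list list" where
  "leaves Leaf = [[]]"
| "leaves (Node j a l r) = map (Cons False) (leaves l) @ map (Cons True) (leaves r)"

fun split_at :: "'d tree \<Rightarrow> bool list \<Rightarrow> 'd \<times> real" where
  "split_at Leaf p = undefined"
| "split_at (Node j a l r) [] = (j, a)"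
| "split_at (Node j a l r) (b # p) = split_at (if b then r else l) p"

fun cell :: "(real^'d) set \<Rightarrow> 'd tree \<Rightarrow> bool list \<Rightarrow> (real^'d) set" where
  "cell A t [] = A"
| "cell A Leaf (b # p) = {}"
| "cell A (Node j a l r) (False # p) = cell {x\<in>A. x$j < a} l p"
| "cell A (Node j a l r) (True # p) = cell {x\<in>A. x$j \<ge> a} r p"

definition step :: "real \<Rightarrow> real" where
  "step u = 2 * (if u \<ge> 0 then 1 else 0) - 1"

definition net :: "(real \<Rightarrow> real) \<Rightarrow> (real \<Rightarrow> real) \<Rightarrow> nat \<Rightarrow> nat \<Rightarrow>
    (nat \<Rightarrow> real^'d) \<Rightarrow> (nat \<Rightarrow> real) \<Rightarrow> (nat \<Rightarrow> nat \<Rightarrow> real) \<Rightarrow> (nat \<Rightarrow> real) \<Rightarrow>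
    (nat \<Rightarrow> real) \<Rightarrow> real \<Rightarrow> real^'d \<Rightarrow> real" where
  "net s1 s2 m1 m2 W1 b1 W2 b2 Wout bout x =
     (\<Sum>k'<m2. Wout k' * s2 ((\<Sum>k<m1. W2 k k' * s1 (W1 k \<bullet> x + b1 k)) + b2 k')) + bout"

text \<open>Conditional expectation E[Y | X in A] (0 if P(X in A) = 0, as x/0 = 0).\<close>
definition cexp :: "'o measure \<Rightarrow> ('o \<Rightarrow> 'x) \<Rightarrow> ('o \<Rightarrow> real) \<Rightarrow> 'x set \<Rightarrow> real" where
  "cexp N X Y A = (\<integral>\<omega>. indicator A (X \<omega>) * Y \<omega> \<partial>N) / measure N (X -` A \<inter> space N)"

definition W1s :: "'d tree \<Rightarrow> nat \<Rightarrow> real^'d" where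
  "W1s t k = axis (fst (split_at t (inodes t ! k))) 1"

definition b1s :: "'d tree \<Rightarrow> nat \<Rightarrow> real" where
  "b1s t k = - snd (split_at t (inodes t ! k))"

definition W2s :: "'d tree \<Rightarrow> nat \<Rightarrow> nat \<Rightarrow> real" where
  "W2s t k k' = (let p = inodes t ! k; q = leaves t ! k' in
     if length p < length q \<and> take (length p) q = p
     then (if q ! length p then 1 else -1) else 0)"

definition b2s :: "'d tree \<Rightarrow> nat \<Rightarrow> real" where
  "b2s t k' = - real (length (leaves t ! k')) + 1/2"

definition Wouts :: "'o measure \<Rightarrow> ('o \<Rightarrow> real^'d) \<Rightarrow> ('o \<Rightarrow> real) \<Rightarrow> 'd tree \<Rightarrow> nat \<Rightarrow> real" where
  "Wouts N X Y t k' = cexp N X Y (cell (cbox 0 One) t (leaves t ! k')) / 2"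

definition bouts :: "'o measure \<Rightarrow> ('o \<Rightarrow> real^'d) \<Rightarrow> ('o \<Rightarrow> real) \<Rightarrow> 'd tree \<Rightarrow> real" where
  "bouts N X Y t = (\<Sum>k'<length (leaves t). cexp N X Y (cell (cbox 0 One) t (leaves t ! k'))) / 2"

text \<open>t_{lambda*}: the network with threshold activations (equals the tree).\<close>
definition t_net :: "'o measure \<Rightarrow> ('o \<Rightarrow> real^'d) \<Rightarrow> ('o \<Rightarrow> real) \<Rightarrow> 'd tree \<Rightarrow> real^'d \<Rightarrow> real" where
  "t_net N X Y t = net step step (length (inodes t)) (length (leaves t))
     (W1s t) (b1s t) (W2s t) (b2s t) (Wouts N X Y t) (bouts N X Y t)"

definition f_net :: "real \<Rightarrow> real \<Rightarrow> 'o measure \<Rightarrow> ('o \<Rightarrow> real^'d) \<Rightarrow> ('o \<Rightarrow> real) \<Rightarrow> 'd tree \<Rightarrow> real^'d \<Rightarrow> real" where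
  "f_net g1 g2 N X Y t = net (\<lambda>u. tanh (g1 * u)) (\<lambda>u. tanh (g2 * u))
     (length (inodes t)) (length (leaves t))
     (W1s t) (b1s t) (W2s t) (b2s t) (Wouts N X Y t) (bouts N X Y t)"

end

theory Submission
  imports Defs
begin

text \<open>Away from the slabs of width \<open>2\<eta>\<close> around the split hyperplanes, every first-layer
  \<open>tanh (\<gamma>\<^sub>1 u)\<close> is within \<open>2 exp (-2 \<gamma>\<^sub>1 \<eta>)\<close> of \<open>\<tau> u\<close>. The second-layer input of the threshold
  network is \<open>1/2\<close> on the leaf containing \<open>x\<close> and at most \<open>-3/2\<close> on every other leaf, so this
  perturbation keeps a margin of almost \<open>1/2\<close> and the second \<open>tanh\<close> is exponentially close to
  \<open>\<tau>\<close> as well. Inside the slabs only the trivial bound \<open>K\<^sub>n B\<close>, \<open>B = \<parallel>Y\<parallel>\<^sub>\<infinity>\<close>, is available, but the slabs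
  have total uniform measure at most \<open>2 K\<^sub>n \<eta>\<close>. With \<open>\<eta> = ln \<gamma>\<^sub>1 / \<gamma>\<^sub>1\<close> the mean squared error is
  at most \<open>(K\<^sub>n B)\<^sup>2 (exp (-2 \<gamma>\<^sub>2 (1 - 4 K\<^sub>n / \<gamma>\<^sub>1\<^sup>2)) + 2 K\<^sub>n ln \<gamma>\<^sub>1 / \<gamma>\<^sub>1)\<close>, which the rate
  assumptions send to zero, uniformly in the tree.\<close>

lemma length_leaves_eq_Suc_length_inodes: "length (leaves t) = Suc (length (inodes t))"
  by (induction t) auto

lemma length_filter_ancestors_leaf:
  "q \<in> set (leaves t) \<Longrightarrow>
   length (filter (\<lambda>p. length p < length q \<and> take (length p) q = p) (inodes t)) = length q"
proof (induction t arbitrary: q)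
  case (Node j a l r)
  then obtain b q' where "q = b # q'"
    and "(b = False \<and> q' \<in> set (leaves l)) \<or> (b = True \<and> q' \<in> set (leaves r))"
    by auto
  then show ?case
    using Node.IH by (auto simp: filter_map o_def)
qed simp

lemma sum_signs_eq_card_or_le:
  fixes e :: "'a \<Rightarrow> real"
  assumes "finite S" and "\<And>k. k \<in> S \<Longrightarrow> e k \<in> {-1, 0, 1}"
  shows "sum e S = card {k\<in>S. e k \<noteq> 0} \<or> sum e S \<le> real (card {k\<in>S. e k \<noteq> 0}) - 2"
  using assms
proof (induction S rule: finite_induct)
  case (insert x F)
  have "{k\<in>insert x F. e k \<noteq> 0} = (if e x = 0 then {k\<in>F. e k \<noteq> 0} else insert x {k\<in>F. e k \<noteq> 0})"
    by auto
  then have "card {k\<in>insert x F. e k \<noteq> 0} = (if e x = 0 then 0 else 1) + card {k\<in>F. e k \<noteq> 0}"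
    using insert.hyps by simp
  moreover have "e x \<in> {-1, 0, 1}"
    using insert.prems by simp
  moreover have "sum e F = card {k\<in>F. e k \<noteq> 0} \<or> sum e F \<le> real (card {k\<in>F. e k \<noteq> 0}) - 2"
    using insert.IH insert.prems by simp
  ultimately show ?case
    using insert.hyps by auto
qed simp

lemma abs_sum_mult_le:
  fixes a b :: "nat \<Rightarrow> real"
  assumes "\<And>k. k < m \<Longrightarrow> \<bar>a k\<bar> \<le> A" and "\<And>k. k < m \<Longrightarrow> \<bar>b k\<bar> \<le> C"
  shows "\<bar>\<Sum>k<m. a k * b k\<bar> \<le> real m * (A * C)"
proof -
  have "\<bar>\<Sum>k<m. a k * b k\<bar> \<le> (\<Sum>k<m. \<bar>a k * b k\<bar>)"
    by (rule sum_abs)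
  also have "\<dots> \<le> (\<Sum>k<m. A * C)"
  proof (rule sum_mono)
    fix k assume "k \<in> {..<m}"
    then have "\<bar>a k\<bar> \<le> A" and "\<bar>b k\<bar> \<le> C"
      using assms by auto
    then show "\<bar>a k * b k\<bar> \<le> A * C"
      by (simp add: abs_mult mult_mono')
  qed
  finally show ?thesis
    by simp
qed

lemma one_minus_tanh_le: "1 - tanh (y::real) \<le> 2 * exp (-2*y)"
proof -
  have pos: "0 < 1 + exp (-2*y)"
    by (simp add: add_pos_pos)
  then have "1 - tanh y = 2 * exp (-2*y) / (1 + exp (-2*y))"
    unfolding tanh_real_altdef by (simp add: field_simps add_divide_distrib[symmetric])
  also have "\<dots> \<le> 2 * exp (-2*y)"
    using pos by (simp add: divide_le_eq)
  finally show ?thesis .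
qed

lemma abs_tanh_le_1: "\<bar>tanh (y::real)\<bar> \<le> 1"
  using tanh_real_lt_1[of y] tanh_real_gt_neg1[of y] by linarith

lemma step_eq_1_or_minus_1: "step u = 1 \<or> step u = -1"
  by (simp add: step_def)

lemma abs_tanh_minus_step_le:
  fixes g m u v :: real
  assumes "g \<ge> 0" and "(v \<ge> 0 \<and> u \<ge> m) \<or> (v < 0 \<and> u \<le> -m)"
  shows "\<bar>tanh (g*u) - step v\<bar> \<le> 2 * exp (-2*g*m)"
  using assms(2)
proof (elim disjE conjE)
  assume "v \<ge> 0" "u \<ge> m"
  then have "\<bar>tanh (g*u) - step v\<bar> = 1 - tanh (g*u)"
    using abs_tanh_le_1[of "g*u"] by (simp add: step_def)
  also have "\<dots> \<le> 2 * exp (-2*(g*u))"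
    by (rule one_minus_tanh_le)
  also have "\<dots> \<le> 2 * exp (-2*g*m)"
    using assms(1) \<open>u \<ge> m\<close> by (simp add: mult_left_mono)
  finally show ?thesis .
next
  assume "v < 0" "u \<le> -m"
  then have "\<bar>tanh (g*u) - step v\<bar> = 1 - tanh (g*(-u))"
    using abs_tanh_le_1[of "g*u"] by (simp add: step_def)
  also have "\<dots> \<le> 2 * exp (-2*(g*(-u)))"
    by (rule one_minus_tanh_le)
  also have "\<dots> \<le> 2 * exp (-2*g*m)"
    using mult_left_mono[OF \<open>u \<le> -m\<close> assms(1)] by simp
  finally show ?thesis .
qed

lemma abs_cexp_le:
  assumes "prob_space N" and "AE \<omega> in N. \<bar>Y \<omega>\<bar> \<le> B" and "B \<ge> 0"
  shows "\<bar>cexp N X Y A\<bar> \<le> B"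
proof (cases "measure N (X -` A \<inter> space N) = 0")
  case True
  then show ?thesis
    using assms(3) by (simp add: cexp_def)
next
  case False
  interpret prob_space N by fact
  let ?S = "X -` A \<inter> space N"
  have S: "?S \<in> sets N"
    using False measure_notin_sets by blast
  have "\<bar>\<integral>\<omega>. indicator A (X \<omega>) * Y \<omega> \<partial>N\<bar> \<le> (\<integral>\<omega>. norm (indicator A (X \<omega>) * Y \<omega>) \<partial>N)"
    using integral_norm_bound[of N "\<lambda>\<omega>. indicator A (X \<omega>) * Y \<omega>"] by simp
  also have "\<dots> \<le> (\<integral>\<omega>. B * indicator ?S \<omega> \<partial>N)"
  proof (rule integral_mono_AE')
    show "integrable N (\<lambda>\<omega>. B * indicator ?S \<omega>)"
      using S by (intro integrable_mult_right) (auto simp: integrable_indicator_iff less_top[symmetric])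
    show "AE \<omega> in N. norm (indicator A (X \<omega>) * Y \<omega>) \<le> B * indicator ?S \<omega>"
      using assms(2)
    proof (rule AE_mp, intro AE_I2 impI)
      fix \<omega> assume "\<omega> \<in> space N" and "\<bar>Y \<omega>\<bar> \<le> B"
      then show "norm (indicator A (X \<omega>) * Y \<omega>) \<le> B * indicator ?S \<omega>"
        using assms(3) by (auto simp: indicator_def)
    qed
    show "AE \<omega> in N. 0 \<le> B * indicator ?S \<omega>"
      using assms(3) by simp
  qed
  also have "\<dots> = B * measure N ?S"
    using S by simp
  finally show ?thesis
    using False unfolding cexp_def by (simp add: abs_div divide_le_eq zero_less_measure_iff)
qed

definition preact2 :: "(real \<Rightarrow> real) \<Rightarrow> 'd tree \<Rightarrow> real^'d \<Rightarrow> nat \<Rightarrow> real" where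
  "preact2 s t x k' = (\<Sum>k<length (inodes t). W2s t k k' * s (W1s t k \<bullet> x + b1s t k)) + b2s t k'"

definition slab :: "'d tree \<Rightarrow> real \<Rightarrow> nat \<Rightarrow> (real^'d) set" where
  "slab t \<eta> k = {x. \<bar>W1s t k \<bullet> x + b1s t k\<bar> < \<eta>}"

lemma f_net_minus_t_net:
  "f_net g1 g2 N X Y t x - t_net N X Y t x =
   (\<Sum>k'<length (leaves t). Wouts N X Y t k' *
      (tanh (g2 * preact2 (\<lambda>u. tanh (g1 * u)) t x k') - step (preact2 step t x k')))"
  unfolding f_net_def t_net_def net_def preact2_def
  by (simp add: sum_subtractf[symmetric] algebra_simps)

text \<open>Column \<open>k'\<close> of \<open>W2s t\<close> is nonzero exactly at the \<open>\<ell>(k')\<close> ancestors of leaf \<open>k'\<close>, so the sum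
  equals \<open>\<ell>(k')\<close> if all first-layer signs point towards the leaf and drops by at least 2
  otherwise.\<close>
lemma preact2_step_cases:
  assumes "k' < length (leaves t)"
  shows "preact2 step t x k' = 1/2 \<or> preact2 step t x k' \<le> -3/2"
proof -
  define q where "q = leaves t ! k'"
  define e where "e = (\<lambda>k. W2s t k k' * step (W1s t k \<bullet> x + b1s t k))"
  have e_signs: "e k \<in> {-1, 0, 1}" for k
    using step_eq_1_or_minus_1 unfolding e_def W2s_def Let_def by auto
  have "{k\<in>{..<length (inodes t)}. e k \<noteq> 0} =
        {k. k < length (inodes t) \<and> length (inodes t ! k) < length q \<and> take (length (inodes t ! k)) q = inodes t ! k}"
    unfolding e_def W2s_def q_def Let_def by (auto simp: step_def split: if_splits)
  then have "card {k\<in>{..<length (inodes t)}. e k \<noteq> 0} = length q"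
    using length_filter_ancestors_leaf[of q t] assms
    by (simp add: length_filter_conv_card q_def)
  moreover have "preact2 step t x k' = sum e {..<length (inodes t)} - real (length q) + 1/2"
    unfolding preact2_def e_def b2s_def q_def by simp
  ultimately show ?thesis
    using sum_signs_eq_card_or_le[of "{..<length (inodes t)}" e] e_signs by auto
qed

lemma abs_preact2_tanh_minus_step_le:
  assumes "g \<ge> 0" and "\<And>k. k < length (inodes t) \<Longrightarrow> x \<notin> slab t \<eta> k"
  shows "\<bar>preact2 (\<lambda>u. tanh (g * u)) t x k' - preact2 step t x k'\<bar>
           \<le> real (length (inodes t)) * (2 * exp (-2*g*\<eta>))"
proof -
  have "preact2 (\<lambda>u. tanh (g * u)) t x k' - preact2 step t x k' =
        (\<Sum>k<length (inodes t). W2s t k k' * (tanh (g * (W1s t k \<bullet> x + b1s t k)) - step (W1s t k \<bullet> x + b1s t k)))"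
    unfolding preact2_def by (simp add: sum_subtractf[symmetric] algebra_simps)
  also have "\<bar>\<dots>\<bar> \<le> real (length (inodes t)) * (1 * (2 * exp (-2*g*\<eta>)))"
  proof (rule abs_sum_mult_le)
    fix k
    show "\<bar>W2s t k k'\<bar> \<le> 1"
      by (simp add: W2s_def Let_def)
    assume "k < length (inodes t)"
    then show "\<bar>tanh (g * (W1s t k \<bullet> x + b1s t k)) - step (W1s t k \<bullet> x + b1s t k)\<bar> \<le> 2 * exp (-2*g*\<eta>)"
      using assms(2)[of k] unfolding slab_def
      by (intro abs_tanh_minus_step_le[OF assms(1)]) (auto simp: abs_if split: if_splits)
  qed
  finally show ?thesis
    by simp
qed

lemma abs_f_net_minus_t_net_le:
  assumes "\<And>k'. \<bar>Wouts N X Y t k'\<bar> \<le> B/2"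
  shows "\<bar>f_net g1 g2 N X Y t x - t_net N X Y t x\<bar> \<le> real (length (leaves t)) * B"
proof -
  have "\<bar>f_net g1 g2 N X Y t x - t_net N X Y t x\<bar> \<le> real (length (leaves t)) * (B/2 * 2)"
    unfolding f_net_minus_t_net
  proof (rule abs_sum_mult_le)
    fix k'
    show "\<bar>Wouts N X Y t k'\<bar> \<le> B/2"
      by (rule assms)
    show "\<bar>tanh (g2 * preact2 (\<lambda>u. tanh (g1 * u)) t x k') - step (preact2 step t x k')\<bar> \<le> 2"
      using abs_tanh_le_1 step_eq_1_or_minus_1 by (smt (verit))
  qed
  then show ?thesis
    by simp
qed

lemma abs_f_net_minus_t_net_le_off_slabs:
  assumes "g1 \<ge> 0" and "g2 \<ge> 0" and "\<And>k'. \<bar>Wouts N X Y t k'\<bar> \<le> B/2"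
    and "\<And>k. k < length (inodes t) \<Longrightarrow> x \<notin> slab t \<eta> k"
    and "real (length (inodes t)) * (2 * exp (-2*g1*\<eta>)) \<le> \<epsilon>"
  shows "\<bar>f_net g1 g2 N X Y t x - t_net N X Y t x\<bar> \<le> real (length (leaves t)) * B * exp (-g2*(1 - 2*\<epsilon>))"
proof -
  have "\<bar>f_net g1 g2 N X Y t x - t_net N X Y t x\<bar>
          \<le> real (length (leaves t)) * (B/2 * (2 * exp (-2*g2*(1/2 - \<epsilon>))))"
    unfolding f_net_minus_t_net
  proof (rule abs_sum_mult_le)
    fix k'
    show "\<bar>Wouts N X Y t k'\<bar> \<le> B/2"
      by (rule assms(3))
    let ?zf = "preact2 (\<lambda>u. tanh (g1 * u)) t x k'" and ?zt = "preact2 step t x k'"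
    assume "k' < length (leaves t)"
    moreover have "\<bar>?zf - ?zt\<bar> \<le> real (length (inodes t)) * (2 * exp (-2*g1*\<eta>))"
      using assms(4) by (rule abs_preact2_tanh_minus_step_le[OF assms(1)])
    then have "\<bar>?zf - ?zt\<bar> \<le> \<epsilon>"
      using assms(5) by linarith
    ultimately show "\<bar>tanh (g2 * ?zf) - step ?zt\<bar> \<le> 2 * exp (-2*g2*(1/2 - \<epsilon>))"
      using preact2_step_cases[of k' t x] by (intro abs_tanh_minus_step_le[OF assms(2)]) auto
  qed
  then show ?thesis
    by (simp add: algebra_simps)
qed

lemma sq_f_net_minus_t_net_le:
  assumes "g1 \<ge> 0" and "g2 \<ge> 0" and "\<And>k'. \<bar>Wouts N X Y t k'\<bar> \<le> B/2"
    and "real (length (inodes t)) * (2 * exp (-2*g1*\<eta>)) \<le> \<epsilon>"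
  shows "(f_net g1 g2 N X Y t x - t_net N X Y t x)\<^sup>2 \<le>
     (real (length (leaves t)) * B * exp (-g2*(1 - 2*\<epsilon>)))\<^sup>2 +
     (real (length (leaves t)) * B)\<^sup>2 * (\<Sum>k<length (inodes t). indicator (slab t \<eta> k) x)"
proof -
  let ?d = "f_net g1 g2 N X Y t x - t_net N X Y t x"
  let ?S = "\<Sum>k<length (inodes t). indicator (slab t \<eta> k) x :: real"
  have "0 \<le> ?S"
    by (intro sum_nonneg) auto
  show ?thesis
  proof (cases "\<exists>k<length (inodes t). x \<in> slab t \<eta> k")
    case True
    then obtain k0 where "k0 < length (inodes t)" and "x \<in> slab t \<eta> k0"
      by blast
    then have "indicator (slab t \<eta> k0) x \<le> ?S"
      by (intro member_le_sum) auto
    then have "(real (length (leaves t)) * B)\<^sup>2 * 1 \<le> (real (length (leaves t)) * B)\<^sup>2 * ?S"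
      using \<open>x \<in> slab t \<eta> k0\<close> by (intro mult_left_mono) auto
    moreover have "?d\<^sup>2 \<le> (real (length (leaves t)) * B)\<^sup>2"
      using abs_f_net_minus_t_net_le[OF assms(3)] by (metis abs_ge_zero power2_abs power_mono)
    ultimately show ?thesis
      using zero_le_power2[of "real (length (leaves t)) * B * exp (-g2*(1 - 2*\<epsilon>))"] by linarith
  next
    case False
    then have "?d\<^sup>2 \<le> (real (length (leaves t)) * B * exp (-g2*(1 - 2*\<epsilon>)))\<^sup>2"
      using abs_f_net_minus_t_net_le_off_slabs[OF assms(1-3) _ assms(4)]
      by (metis abs_ge_zero power2_abs power_mono)
    then show ?thesis
      using mult_nonneg_nonneg[OF zero_le_power2 \<open>0 \<le> ?S\<close>, of "real (length (leaves t)) * B"]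
      by linarith
  qed
qed

lemma sets_borel_abs_affine_less: "{x::real^'d::finite. \<bar>w \<bullet> x + c\<bar> < \<eta>} \<in> sets borel"
  by (intro borel_open open_Collect_less continuous_intros)

lemma measure_uniform_unit_cube_slab_le:
  fixes j :: "'d::finite"
  assumes "\<eta> > 0"
  shows "measure (uniform_measure lborel (cbox 0 (One::real^'d))) {x. \<bar>axis j 1 \<bullet> x + c\<bar> < \<eta>} \<le> 2*\<eta>"
proof -
  let ?S = "{x::real^'d. \<bar>axis j 1 \<bullet> x + c\<bar> < \<eta>}"
  define l :: "real^'d" where "l = (\<chi> i. if i = j then -c-\<eta> else 0)"
  define u :: "real^'d" where "u = (\<chi> i. if i = j then -c+\<eta> else 1)"
  have S: "?S \<in> sets lborel"
    using sets_borel_abs_affine_less by simp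
  have "measure (uniform_measure lborel (cbox 0 (One::real^'d))) ?S
        = measure lborel (cbox 0 One \<inter> ?S) / measure lborel (cbox 0 (One::real^'d))"
    using S by (intro measure_uniform_measure) auto
  also have "\<dots> = measure lborel (cbox 0 One \<inter> ?S)"
    by simp
  also have "\<dots> \<le> measure lborel (cbox l u)"
  proof (rule measure_mono_fmeasurable)
    show "cbox 0 One \<inter> ?S \<subseteq> cbox l u"
      unfolding l_def u_def by (auto simp: mem_box_cart inner_axis' Cart_1[symmetric])
  qed (use S in auto)
  also have "\<dots> = (\<Prod>i\<in>UNIV. u$i - l$i)"
  proof (rule content_cbox_cart)
    have "l \<in> cbox l u"
      using assms unfolding l_def u_def mem_box_cart by auto
    then show "cbox l u \<noteq> {}"
      by auto
  qed
  also have "\<dots> = (\<Prod>i\<in>UNIV. if i = j then 2*\<eta> else 1)"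
    by (intro prod.cong) (auto simp: l_def u_def)
  also have "\<dots> = 2*\<eta>"
    by simp
  finally show ?thesis .
qed

lemma integral_sq_f_net_minus_t_net_le:
  fixes t :: "'d::finite tree"
  assumes "g1 \<ge> 0" and "g2 \<ge> 0" and "\<eta> > 0"
    and "\<And>k'. \<bar>Wouts N X Y t k'\<bar> \<le> B/2"
    and "real (length (inodes t)) * (2 * exp (-2*g1*\<eta>)) \<le> \<epsilon>"
  shows "(LINT x : cbox 0 One | uniform_measure lborel (cbox 0 (One::real^'d)).
            (f_net g1 g2 N X Y t x - t_net N X Y t x)\<^sup>2) \<le>
     (real (length (leaves t)) * B * exp (-g2*(1 - 2*\<epsilon>)))\<^sup>2 +
     (real (length (leaves t)) * B)\<^sup>2 * (real (length (inodes t)) * (2*\<eta>))"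
proof -
  let ?\<mu> = "uniform_measure lborel (cbox 0 (One::real^'d))"
  define m where "m = length (inodes t)"
  define C1 where "C1 = (real (length (leaves t)) * B * exp (-g2*(1 - 2*\<epsilon>)))\<^sup>2"
  define C2 where "C2 = (real (length (leaves t)) * B)\<^sup>2"
  interpret prob_space ?\<mu>
    by (intro prob_space_uniform_measure) auto
  have slab_sets: "slab t \<eta> k \<in> sets ?\<mu>" for k
    unfolding slab_def using sets_borel_abs_affine_less by simp
  have slab_integrable: "integrable ?\<mu> (indicator (slab t \<eta> k) :: _ \<Rightarrow> real)" for k
  proof -
    have "integrable ?\<mu> (\<lambda>x. indicator (slab t \<eta> k) x *\<^sub>R (1::real))"
      by (rule integrable_indicator[OF slab_sets]) (metis emeasure_finite infinity_ennreal_def less_top)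
    then show ?thesis
      by simp
  qed
  have bound_integrable: "integrable ?\<mu> (\<lambda>x. C1 + C2 * (\<Sum>k<m. indicator (slab t \<eta> k) x))"
    using slab_integrable by (intro Bochner_Integration.integrable_add integrable_mult_right integrable_sum) auto
  have "(LINT x : cbox 0 One | ?\<mu>. (f_net g1 g2 N X Y t x - t_net N X Y t x)\<^sup>2)
        \<le> (\<integral>x. C1 + C2 * (\<Sum>k<m. indicator (slab t \<eta> k) x) \<partial>?\<mu>)"
    unfolding set_lebesgue_integral_def
  proof (rule integral_mono'[OF bound_integrable])
    fix x
    have "0 \<le> (\<Sum>k<m. indicator (slab t \<eta> k) x :: real)"
      by (intro sum_nonneg) auto
    then show "0 \<le> C1 + C2 * (\<Sum>k<m. indicator (slab t \<eta> k) x)"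
      unfolding C1_def C2_def by simp
    then show "indicator (cbox 0 One) x *\<^sub>R (f_net g1 g2 N X Y t x - t_net N X Y t x)\<^sup>2
               \<le> C1 + C2 * (\<Sum>k<m. indicator (slab t \<eta> k) x)"
      using sq_f_net_minus_t_net_le[OF assms(1,2,4,5), of x]
      unfolding C1_def C2_def m_def by (auto simp: indicator_def)
  qed
  also have "\<dots> = C1 + C2 * (\<Sum>k<m. measure ?\<mu> (slab t \<eta> k))"
    using slab_integrable slab_sets by (simp add: integral_sum)
  also have "\<dots> \<le> C1 + C2 * (\<Sum>k<m. 2*\<eta>)"
  proof -
    have "measure ?\<mu> (slab t \<eta> k) \<le> 2*\<eta>" for k
      unfolding slab_def W1s_def by (rule measure_uniform_unit_cube_slab_le[OF assms(3)])
    then show ?thesis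
      unfolding C2_def by (intro add_left_mono mult_left_mono sum_mono) auto
  qed
  finally show ?thesis
    unfolding C1_def C2_def m_def by simp
qed

text \<open>The bound of the previous lemma for \<open>\<eta> = ln g1 / g1\<close>, where \<open>exp (-2 g1 \<eta>) = 1 / g1\<^sup>2\<close>
  allows \<open>\<epsilon> = 2 k / g1\<^sup>2\<close>.\<close>
definition tanh_error_bound :: "real \<Rightarrow> real \<Rightarrow> real \<Rightarrow> real \<Rightarrow> real" where
  "tanh_error_bound B k g1 g2 = (k * B)\<^sup>2 * (exp (-2 * g2 * (1 - 4 * k / g1\<^sup>2)) + 2 * k * ln g1 / g1)"

lemma integral_sq_f_net_minus_t_net_le_tanh_error_bound:
  fixes t :: "'d::finite tree"
  assumes "g1 > 1" and "g2 \<ge> 0" and "\<And>k'. \<bar>Wouts N X Y t k'\<bar> \<le> B/2"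
  shows "(LINT x : cbox 0 One | uniform_measure lborel (cbox 0 (One::real^'d)).
            (f_net g1 g2 N X Y t x - t_net N X Y t x)\<^sup>2)
         \<le> tanh_error_bound B (length (leaves t)) g1 g2"
proof -
  define k where "k = real (length (leaves t))"
  define \<eta> where "\<eta> = ln g1 / g1"
  have inodes_le: "real (length (inodes t)) \<le> k"
    unfolding k_def length_leaves_eq_Suc_length_inodes by simp
  have "-2 * g1 * \<eta> = - (2 * ln g1)"
    using assms(1) by (simp add: \<eta>_def)
  then have "exp (-2 * g1 * \<eta>) = inverse (exp (ln g1) ^ 2)"
    by (simp add: exp_minus exp_of_nat_mult[symmetric])
  then have "exp (-2 * g1 * \<eta>) = 1 / g1\<^sup>2"
    using assms(1) by (simp add: inverse_eq_divide)
  then have "real (length (inodes t)) * (2 * exp (-2 * g1 * \<eta>)) \<le> 2 * k / g1\<^sup>2"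
    using inodes_le by (simp add: divide_right_mono)
  then have "(LINT x : cbox 0 One | uniform_measure lborel (cbox 0 (One::real^'d)).
            (f_net g1 g2 N X Y t x - t_net N X Y t x)\<^sup>2)
         \<le> (k * B * exp (-g2 * (1 - 2 * (2 * k / g1\<^sup>2))))\<^sup>2 + (k * B)\<^sup>2 * (real (length (inodes t)) * (2 * \<eta>))"
    using assms unfolding k_def \<eta>_def by (intro integral_sq_f_net_minus_t_net_le) auto
  also have "\<dots> \<le> (k * B * exp (-g2 * (1 - 2 * (2 * k / g1\<^sup>2))))\<^sup>2 + (k * B)\<^sup>2 * (k * (2 * \<eta>))"
    using inodes_le assms(1) unfolding \<eta>_def by (intro add_left_mono mult_left_mono mult_right_mono) auto
  also have "\<dots> = tanh_error_bound B k g1 g2"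
    unfolding tanh_error_bound_def \<eta>_def
    by (simp add: exp_of_nat_mult[symmetric] algebra_simps)
  finally show ?thesis
    unfolding k_def .
qed

lemma nn_integral_sq_f_net_minus_t_net_le_tanh_error_bound:
  fixes T :: "'w \<Rightarrow> 'd::finite tree" and k :: nat
  assumes "prob_space M" and "\<And>\<omega>. \<omega> \<in> space M \<Longrightarrow> length (leaves (T \<omega>)) = k"
    and "g1 > 1" and "g2 \<ge> 0" and "\<And>t k'. \<bar>Wouts N X Y t k'\<bar> \<le> B/2"
  shows "(\<integral>\<^sup>+ \<omega>. ennreal (LINT x : cbox 0 One | uniform_measure lborel (cbox 0 (One::real^'d)).
            (f_net g1 g2 N X Y (T \<omega>) x - t_net N X Y (T \<omega>) x)\<^sup>2) \<partial>M)
         \<le> ennreal (tanh_error_bound B k g1 g2)"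
proof -
  have "(LINT x : cbox 0 One | uniform_measure lborel (cbox 0 (One::real^'d)).
            (f_net g1 g2 N X Y (T \<omega>) x - t_net N X Y (T \<omega>) x)\<^sup>2) \<le> tanh_error_bound B k g1 g2"
    if "\<omega> \<in> space M" for \<omega>
    using integral_sq_f_net_minus_t_net_le_tanh_error_bound[OF assms(3,4,5), of "T \<omega>"] assms(2)[OF that]
    by simp
  then have "(\<integral>\<^sup>+ \<omega>. ennreal (LINT x : cbox 0 One | uniform_measure lborel (cbox 0 (One::real^'d)).
               (f_net g1 g2 N X Y (T \<omega>) x - t_net N X Y (T \<omega>) x)\<^sup>2) \<partial>M)
             \<le> (\<integral>\<^sup>+ \<omega>. ennreal (tanh_error_bound B k g1 g2) \<partial>M)"
    by (intro nn_integral_mono ennreal_leI)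
  also have "\<dots> = ennreal (tanh_error_bound B k g1 g2)"
    using prob_space.emeasure_space_1[OF assms(1)] by simp
  finally show ?thesis .
qed

lemma rate_terms_le:
  fixes k :: nat and g1 g2 :: real
  assumes "g1 \<ge> exp 1" and "g2 \<ge> 1"
  shows "real k * g2 / g1\<^sup>2 \<le> real k ^ 4 * g2\<^sup>2 * ln g1 / g1"
    and "real k ^ 3 * ln g1 / g1 \<le> real k ^ 4 * g2\<^sup>2 * ln g1 / g1"
proof -
  have g1: "g1 \<ge> 1"
    using assms(1) exp_ge_add_one_self[of 1] by linarith
  have ln_g1: "ln g1 \<ge> 1"
    using assms(1) g1 by (subst ln_ge_iff) auto
  have "k = 0 \<or> 1 \<le> real k"
    by (cases k) auto
  then have k4: "real k \<le> real k ^ 4" and k34: "real k ^ 3 \<le> real k ^ 4"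
    using power_increasing[of 1 4 "real k"] power_increasing[of 3 4 "real k"] by auto
  have g22: "g2 \<le> g2\<^sup>2"
    using assms(2) by (simp add: power2_eq_square)
  have "real k * g2 \<le> real k ^ 4 * g2\<^sup>2"
    using k4 g22 assms(2) by (intro mult_mono) auto
  also have "\<dots> \<le> real k ^ 4 * g2\<^sup>2 * ln g1"
    using mult_left_mono[OF ln_g1, of "real k ^ 4 * g2\<^sup>2"] by simp
  finally have "real k * g2 / g1 \<le> real k ^ 4 * g2\<^sup>2 * ln g1 / g1"
    using g1 by (intro divide_right_mono) auto
  moreover have "real k * g2 / g1\<^sup>2 \<le> real k * g2 / g1"
    using g1 assms(2) by (intro divide_left_mono) (auto simp: power2_eq_square)
  ultimately show "real k * g2 / g1\<^sup>2 \<le> real k ^ 4 * g2\<^sup>2 * ln g1 / g1"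
    by linarith
  have "real k ^ 3 * 1 \<le> real k ^ 4 * g2\<^sup>2"
    using k34 g22 assms(2) by (intro mult_mono) auto
  then show "real k ^ 3 * ln g1 / g1 \<le> real k ^ 4 * g2\<^sup>2 * ln g1 / g1"
    using ln_g1 g1 by (intro divide_right_mono mult_right_mono) auto
qed

lemma tanh_error_bound_tendsto_0:
  fixes k :: "nat \<Rightarrow> nat" and g1 g2 :: "nat \<Rightarrow> real"
  assumes "filterlim g1 at_top sequentially" and "filterlim g2 at_top sequentially"
    and "(\<lambda>n. real (k n) ^ 2 * exp (- 2 * g2 n)) \<longlonglongrightarrow> 0"
    and rate: "(\<lambda>n. real (k n) ^ 4 * g2 n ^ 2 * ln (g1 n) / g1 n) \<longlonglongrightarrow> 0"
  shows "(\<lambda>n. tanh_error_bound B (k n) (g1 n) (g2 n)) \<longlonglongrightarrow> 0"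
proof -
  define r where "r = (\<lambda>n. real (k n) * g2 n / g1 n ^ 2)"
  define s where "s = (\<lambda>n. real (k n) ^ 3 * ln (g1 n) / g1 n)"
  have large: "eventually (\<lambda>n. g1 n \<ge> exp 1 \<and> g2 n \<ge> 1) sequentially"
    using assms(1,2) unfolding filterlim_at_top by (auto intro: eventually_conj)
  have "eventually (\<lambda>n. 0 \<le> r n \<and> r n \<le> real (k n) ^ 4 * g2 n ^ 2 * ln (g1 n) / g1 n \<and>
                         0 \<le> s n \<and> s n \<le> real (k n) ^ 4 * g2 n ^ 2 * ln (g1 n) / g1 n) sequentially"
    using large
  proof eventually_elim
    case (elim n)
    moreover have "0 < g1 n" and "0 \<le> ln (g1 n)"
      using elim exp_ge_add_one_self[of 1] by auto
    ultimately show ?case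
      using rate_terms_le[of "g1 n" "g2 n" "k n"] unfolding r_def s_def by auto
  qed
  then have "r \<longlonglongrightarrow> 0" and "s \<longlonglongrightarrow> 0"
    by (auto intro!: tendsto_sandwich[OF _ _ tendsto_const rate] elim: eventually_mono)
  then have "(\<lambda>n. B\<^sup>2 * (real (k n) ^ 2 * exp (- 2 * g2 n)) * exp (8 * r n) + 2 * B\<^sup>2 * s n)
              \<longlonglongrightarrow> B\<^sup>2 * 0 * exp (8 * 0) + 2 * B\<^sup>2 * 0"
    using assms(3) by (intro tendsto_intros)
  then have lim: "(\<lambda>n. B\<^sup>2 * (real (k n) ^ 2 * exp (- 2 * g2 n)) * exp (8 * r n) + 2 * B\<^sup>2 * s n)
                   \<longlonglongrightarrow> 0"
    by simp
  have eq: "tanh_error_bound B (k n) (g1 n) (g2 n) =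
            B\<^sup>2 * (real (k n) ^ 2 * exp (- 2 * g2 n)) * exp (8 * r n) + 2 * B\<^sup>2 * s n" for n
  proof -
    have "-2 * g2 n * (1 - 4 * real (k n) / g1 n ^ 2) = -2 * g2 n + 8 * r n"
      by (simp add: r_def algebra_simps)
    then have "exp (-2 * g2 n * (1 - 4 * real (k n) / g1 n ^ 2)) = exp (- 2 * g2 n) * exp (8 * r n)"
      by (simp only: exp_add)
    then show ?thesis
      unfolding tanh_error_bound_def s_def by (simp only:) (simp add: algebra_simps power2_eq_square power3_eq_cube)
  qed
  show ?thesis
    using lim by (simp only: eq)
qed

theorem proposition2:
  fixes N :: "'o measure" and X :: "'o \<Rightarrow> real^'d::finite" and Y :: "'o \<Rightarrow> real"
    and M :: "nat \<Rightarrow> 'w measure" and T :: "nat \<Rightarrow> 'w \<Rightarrow> 'd tree"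
    and K :: "nat \<Rightarrow> nat" and \<gamma>1 \<gamma>2 :: "nat \<Rightarrow> real"
  assumes "prob_space N"
    and "X \<in> N \<rightarrow>\<^sub>M borel" and "Y \<in> borel_measurable N"
    and "distr N borel X = uniform_measure lborel (cbox 0 One)"
    and "\<exists>B. AE \<omega> in N. \<bar>Y \<omega>\<bar> \<le> B"
    and "\<And>n. prob_space (M n)"
    and "\<And>n \<omega>. \<omega> \<in> space (M n) \<Longrightarrow> length (leaves (T n \<omega>)) = K n"
    and "filterlim (\<lambda>n. real (K n)) at_top sequentially"
    and "filterlim \<gamma>1 at_top sequentially"
    and "filterlim \<gamma>2 at_top sequentially"
    and "(\<lambda>n. real (K n) ^ 2 * exp (- 2 * \<gamma>2 n)) \<longlonglongrightarrow> 0"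
    and "(\<lambda>n. real (K n) ^ 4 * \<gamma>2 n ^ 2 * ln (\<gamma>1 n) / \<gamma>1 n) \<longlonglongrightarrow> 0"
  shows "(\<lambda>n. \<integral>\<^sup>+ \<omega>. ennreal (LINT x : cbox 0 One | distr N borel X.
            (f_net (\<gamma>1 n) (\<gamma>2 n) N X Y (T n \<omega>) x - t_net N X Y (T n \<omega>) x)\<^sup>2) \<partial>M n)
         \<longlonglongrightarrow> 0"
proof -
  obtain B0 where "AE \<omega> in N. \<bar>Y \<omega>\<bar> \<le> B0"
    using assms(5) by blast
  then have bounded: "AE \<omega> in N. \<bar>Y \<omega>\<bar> \<le> \<bar>B0\<bar>"
    by eventually_elim auto
  have W: "\<bar>Wouts N X Y t k'\<bar> \<le> \<bar>B0\<bar> / 2" for t k'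
    using abs_cexp_le[OF assms(1) bounded abs_ge_zero] unfolding Wouts_def by simp
  let ?bound = "\<lambda>n. tanh_error_bound \<bar>B0\<bar> (K n) (\<gamma>1 n) (\<gamma>2 n)"
  have "eventually (\<lambda>n. \<gamma>1 n \<ge> 2 \<and> \<gamma>2 n \<ge> 0) sequentially"
    using assms(9,10) unfolding filterlim_at_top by (auto intro: eventually_conj)
  then have upper: "eventually (\<lambda>n. (\<integral>\<^sup>+ \<omega>. ennreal (LINT x : cbox 0 One | distr N borel X.
            (f_net (\<gamma>1 n) (\<gamma>2 n) N X Y (T n \<omega>) x - t_net N X Y (T n \<omega>) x)\<^sup>2) \<partial>M n) \<le> ?bound n)
      sequentially"
    unfolding assms(4)
    by eventually_elim (auto intro: nn_integral_sq_f_net_minus_t_net_le_tanh_error_bound assms(6,7) W)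
  have "(\<lambda>n. ennreal (?bound n)) \<longlonglongrightarrow> ennreal 0"
    using tanh_error_bound_tendsto_0[OF assms(9-12)] by (rule tendsto_ennrealI)
  then show ?thesis
    by (intro tendsto_sandwich[OF _ upper tendsto_const]) simp_all
qed

end
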